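(* Let $H=(V,E)$ be a hypergraph such that the digraph $\mathcal D_3(H)$ has a spanning subdigraph that is a vertex-disjoint union of non-trivial arborescences. Then $H$ is quasi-eulerian.
   Context: A hypergraph $H=(V,E)$ consists of a finite nonempty vertex set $V$, a finite edge set $E$ disjoint from $V$, and an incidence function assigning to each edge $e\in E$ a subset of $V$ (also denoted $e$); distinct edges may have the same vertex set. Hypergraphs are assumed to have no empty edges. A walk is a sequence $W=v_0e_1v_1e_2\cdots e_kv_k$ with $v_i\in V$, $e_i\in E$, such that for each $i$, $v_{i-1}\ne v_i$ and $v_{i-1},v_i\in e_i$; the $v_i$ are its anchors. $W$ is closed if $k\ge 2$ and $v_0=v_k$; it is a strict trail if $e_1,\dots,e_k$ are pairwise distinct. An Euler family of $H$ is a family of closed strict trails such that every edge of $H$ lies in exactly one trail and no two trails have a common anchor; $H$ is quasi-eulerian if it has one. $\mathcal D_3(H)$ is the digraph with vertex set $E$ and arc set $\{(e,f): e,f\in E,\ |f\setminus e|=1,\ |e\cap f|\ge 3\}$. An arborescence is a digraph whose underlying undirected graph is a tree and whose arcs are all directed towards a root; it is non-trivial if it has at least two vertices. *)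

theory Defs
  imports Main
begin

text \<open>A hypergraph: vertex set V (type 'v), edge set E (type 'e, so disjoint from V),
  incidence function inc giving each edge its (nonempty) vertex set.\<close>
definition hypergraph :: "'v set \<Rightarrow> 'e set \<Rightarrow> ('e \<Rightarrow> 'v set) \<Rightarrow> bool" where
  "hypergraph V E inc \<longleftrightarrow> finite V \<and> V \<noteq> {} \<and> finite E \<and>
     (\<forall>e\<in>E. inc e \<subseteq> V \<and> inc e \<noteq> {})"

text \<open>A walk v0 e1 v1 ... ek vk is represented by the anchor list [v0,...,vk]
  and the edge list [e1,...,ek].\<close>
definition is_walk :: "'v set \<Rightarrow> 'e set \<Rightarrow> ('e \<Rightarrow> 'v set) \<Rightarrow> 'v list \<Rightarrow> 'e list \<Rightarrow> bool" where
  "is_walk V E inc vs es \<longleftrightarrow> length vs = length es + 1 \<and> set vs \<subseteq> V \<and> set es \<subseteq> E \<and>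
     (\<forall>i<length es. vs ! i \<noteq> vs ! (i+1) \<and> vs ! i \<in> inc (es ! i) \<and> vs ! (i+1) \<in> inc (es ! i))"

definition closed_strict_trail :: "'v set \<Rightarrow> 'e set \<Rightarrow> ('e \<Rightarrow> 'v set) \<Rightarrow> 'v list \<Rightarrow> 'e list \<Rightarrow> bool" where
  "closed_strict_trail V E inc vs es \<longleftrightarrow> is_walk V E inc vs es \<and> length es \<ge> 2 \<and>
     hd vs = last vs \<and> distinct es"

definition euler_family :: "'v set \<Rightarrow> 'e set \<Rightarrow> ('e \<Rightarrow> 'v set) \<Rightarrow> ('v list \<times> 'e list) set \<Rightarrow> bool" where
  "euler_family V E inc F \<longleftrightarrow>
     (\<forall>W\<in>F. closed_strict_trail V E inc (fst W) (snd W)) \<and>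
     (\<forall>e\<in>E. \<exists>!W. W \<in> F \<and> e \<in> set (snd W)) \<and>
     (\<forall>W1\<in>F. \<forall>W2\<in>F. W1 \<noteq> W2 \<longrightarrow> set (fst W1) \<inter> set (fst W2) = {})"

definition quasi_eulerian :: "'v set \<Rightarrow> 'e set \<Rightarrow> ('e \<Rightarrow> 'v set) \<Rightarrow> bool" where
  "quasi_eulerian V E inc \<longleftrightarrow> (\<exists>F. euler_family V E inc F)"

text \<open>Arc set of the digraph D_3(H) (its vertex set is E).\<close>
definition D3_arcs :: "'e set \<Rightarrow> ('e \<Rightarrow> 'v set) \<Rightarrow> ('e \<times> 'e) set" where
  "D3_arcs E inc = {(e,f). e \<in> E \<and> f \<in> E \<and> card (inc f - inc e) = 1 \<and> card (inc e \<inter> inc f) \<ge> 3}"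

text \<open>Digraph (C, A) is an arborescence: the underlying undirected multigraph is a tree
  (connected, loopless, |A| = |C| - 1) and every vertex reaches the root by a directed path,
  i.e. all arcs are directed towards the root.\<close>
definition arborescence :: "'a set \<Rightarrow> ('a \<times> 'a) set \<Rightarrow> bool" where
  "arborescence C A \<longleftrightarrow> finite C \<and> A \<subseteq> C \<times> C \<and> (\<forall>x. (x,x) \<notin> A) \<and>
     card A + 1 = card C \<and>
     (\<forall>x\<in>C. \<forall>y\<in>C. (x,y) \<in> (A \<union> A\<inverse>)\<^sup>*) \<and>
     (\<exists>r\<in>C. \<forall>x\<in>C. (x,r) \<in> A\<^sup>*)"

definition has_spanning_arborescence_forest :: "'a set \<Rightarrow> ('a \<times> 'a) set \<Rightarrow> bool" where
  "has_spanning_arborescence_forest N Arcs \<longleftrightarrow>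
     (\<exists>A P. A \<subseteq> Arcs \<and>
        \<Union>P = N \<and> (\<forall>C\<in>P. \<forall>D\<in>P. C \<noteq> D \<longrightarrow> C \<inter> D = {}) \<and>
        A \<subseteq> (\<Union>C\<in>P. C \<times> C) \<and>
        (\<forall>C\<in>P. card C \<ge> 2 \<and> arborescence C (A \<inter> (C \<times> C))))"

end

theory Submission
  imports Defs
begin

text \<open>Suppose every edge \<open>e\<close> is given a pair \<open>p e\<close> of two of its vertices such that every vertex
  lies in an even number of these pairs. Read as a multigraph on \<open>V\<close> with edge set \<open>E\<close>, the pairs
  form an even graph; joining its edges at common endpoints cuts it into closed trails, and
  closed trails sharing an anchor can be spliced until the anchors are disjoint, which gives an
  Euler family. Such a pairing is built along the arborescences by removing a leaf \<open>x\<close> of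
  maximal depth: the arc from \<open>x\<close> to its parent \<open>f\<close> lies in \<open>D\<^sub>3(H)\<close>, so \<open>x\<close> and \<open>f\<close> share at
  least three vertices and \<open>f\<close> has only one vertex outside \<open>x\<close>, which leaves enough room to
  reroute the pair of \<open>f\<close> through \<open>x\<close> without changing any parity.\<close>

section \<open>Trails as lists of steps\<close>

text \<open>A trail \<open>v\<^sub>0 e\<^sub>1 v\<^sub>1 \<dots> e\<^sub>k v\<^sub>k\<close> is stored as the list of its steps \<open>(v\<^sub>i\<^sub>-\<^sub>1, e\<^sub>i, v\<^sub>i)\<close>, which makes
  rotating, reversing and concatenating trails list operations; \<open>walk_of\<close> below converts a
  closed trail to the anchor and edge lists used by \<open>closed_strict_trail\<close>.\<close>

abbreviation chained :: "('v \<times> 'e \<times> 'v) list \<Rightarrow> bool" where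
  "chained \<equiv> successively (\<lambda>s t. snd (snd s) = fst t)"

definition start :: "('v \<times> 'e \<times> 'v) list \<Rightarrow> 'v" where
  "start ss = fst (hd ss)"

definition finish :: "('v \<times> 'e \<times> 'v) list \<Rightarrow> 'v" where
  "finish ss = snd (snd (last ss))"

definition trail_edges :: "('v \<times> 'e \<times> 'v) list \<Rightarrow> 'e set" where
  "trail_edges ss = set (map (fst \<circ> snd) ss)"

definition anchors :: "('v \<times> 'e \<times> 'v) list \<Rightarrow> 'v set" where
  "anchors ss = set (map fst ss)"

definition is_step :: "'v set \<Rightarrow> 'e set \<Rightarrow> ('e \<Rightarrow> 'v set) \<Rightarrow> 'v \<times> 'e \<times> 'v \<Rightarrow> bool" where
  "is_step V E inc s \<longleftrightarrow> (case s of (v, e, w) \<Rightarrow>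
     v \<noteq> w \<and> e \<in> E \<and> v \<in> V \<and> w \<in> V \<and> v \<in> inc e \<and> w \<in> inc e)"

definition trail :: "'v set \<Rightarrow> 'e set \<Rightarrow> ('e \<Rightarrow> 'v set) \<Rightarrow> ('v \<times> 'e \<times> 'v) list \<Rightarrow> bool" where
  "trail V E inc ss \<longleftrightarrow> ss \<noteq> [] \<and> chained ss \<and> (\<forall>s\<in>set ss. is_step V E inc s) \<and>
     distinct (map (fst \<circ> snd) ss)"

definition closed_trail :: "'v set \<Rightarrow> 'e set \<Rightarrow> ('e \<Rightarrow> 'v set) \<Rightarrow> ('v \<times> 'e \<times> 'v) list \<Rightarrow> bool" where
  "closed_trail V E inc ss \<longleftrightarrow> trail V E inc ss \<and> finish ss = start ss \<and> length ss \<ge> 2"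

definition open_trail :: "'v set \<Rightarrow> 'e set \<Rightarrow> ('e \<Rightarrow> 'v set) \<Rightarrow> ('v \<times> 'e \<times> 'v) list \<Rightarrow> bool" where
  "open_trail V E inc ss \<longleftrightarrow> trail V E inc ss \<and> start ss \<noteq> finish ss"

lemma start_append [simp]: "ss \<noteq> [] \<Longrightarrow> start (ss @ ts) = start ss"
  by (simp add: start_def)

lemma finish_append [simp]: "ts \<noteq> [] \<Longrightarrow> finish (ss @ ts) = finish ts"
  by (simp add: finish_def)

lemma trail_edges_append [simp]: "trail_edges (ss @ ts) = trail_edges ss \<union> trail_edges ts"
  by (simp add: trail_edges_def)

lemma anchors_append [simp]: "anchors (ss @ ts) = anchors ss \<union> anchors ts"
  by (simp add: anchors_def)

lemma trail_append:
  assumes "trail V E inc ss" "trail V E inc ts" "finish ss = start ts"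
    and "trail_edges ss \<inter> trail_edges ts = {}"
  shows "trail V E inc (ss @ ts)"
  using assms by (auto simp: trail_def successively_append_iff start_def finish_def trail_edges_def)

lemma length_append_ge_2: "ss \<noteq> [] \<Longrightarrow> ts \<noteq> [] \<Longrightarrow> length (ss @ ts) \<ge> 2"
  by (cases ss; cases ts) auto

lemma closed_chained_rotate1:
  assumes "ss \<noteq> []" "chained ss" "finish ss = start ss"
  shows "chained (rotate1 ss) \<and> finish (rotate1 ss) = start (rotate1 ss)"
proof (cases ss)
  case (Cons s ts)
  show ?thesis
  proof (cases ts)
    case (Cons t us)
    have "chained ts" "snd (snd (last ts)) = fst s"
      using assms \<open>ss = s # ts\<close> Cons by (simp_all add: start_def finish_def)
    then have "chained (ts @ [s])"
      using Cons by (simp only: successively_append_iff) simp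
    then show ?thesis
      using assms(2) \<open>ss = s # ts\<close> Cons by (simp add: start_def finish_def)
  qed (use assms \<open>ss = s # ts\<close> in simp)
qed (use assms in simp)

lemma closed_trail_rotate:
  assumes "closed_trail V E inc ss" "v \<in> anchors ss"
  obtains ts where "closed_trail V E inc ts" "start ts = v"
    "trail_edges ts = trail_edges ss" "anchors ts = anchors ss"
proof -
  obtain i where i: "i < length ss" "fst (ss ! i) = v"
    using assms(2) by (auto simp: anchors_def in_set_conv_nth)
  have "chained (rotate n ss) \<and> finish (rotate n ss) = start (rotate n ss)" for n
  proof (induction n)
    case (Suc n)
    then show ?case
      using closed_chained_rotate1[of "rotate n ss"] assms(1) by (simp add: closed_trail_def trail_def)
  qed (use assms(1) in \<open>simp add: closed_trail_def trail_def\<close>)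
  moreover have "start (rotate i ss) = v"
  proof -
    have "ss \<noteq> []"
      using i(1) by auto
    then show ?thesis
      using i by (simp add: start_def hd_rotate_conv_nth)
  qed
  ultimately have "closed_trail V E inc (rotate i ss)"
    using assms(1) by (auto simp: closed_trail_def trail_def rotate_map[symmetric])
  with \<open>start (rotate i ss) = v\<close> show thesis
    by (intro that[of "rotate i ss"]) (auto simp: trail_edges_def anchors_def)
qed

lemma closed_trail_splice:
  assumes "closed_trail V E inc ss" "closed_trail V E inc ts"
    and "trail_edges ss \<inter> trail_edges ts = {}" "v \<in> anchors ss" "v \<in> anchors ts"
  obtains us where "closed_trail V E inc us"
    "trail_edges us = trail_edges ss \<union> trail_edges ts" "anchors us = anchors ss \<union> anchors ts"
proof -
  obtain ss' where ss': "closed_trail V E inc ss'" "start ss' = v"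
      "trail_edges ss' = trail_edges ss" "anchors ss' = anchors ss"
    using closed_trail_rotate[OF assms(1,4)] .
  obtain ts' where ts': "closed_trail V E inc ts'" "start ts' = v"
      "trail_edges ts' = trail_edges ts" "anchors ts' = anchors ts"
    using closed_trail_rotate[OF assms(2,5)] .
  have ne: "ss' \<noteq> []" "ts' \<noteq> []"
    using ss'(1) ts'(1) by (auto simp: closed_trail_def trail_def)
  have "closed_trail V E inc (ss' @ ts')"
    using ss' ts' assms(3) ne
    by (auto simp: closed_trail_def length_append_ge_2 intro!: trail_append)
  then show thesis
    by (rule that) (simp_all add: ss'(3,4) ts'(3,4))
qed

definition trail_ends :: "('v \<times> 'e \<times> 'v) list \<Rightarrow> 'v set" where
  "trail_ends ss = {start ss, finish ss}"

definition reverse_trail :: "('v \<times> 'e \<times> 'v) list \<Rightarrow> ('v \<times> 'e \<times> 'v) list" where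
  "reverse_trail ss = rev (map (\<lambda>(v, e, w). (w, e, v)) ss)"

lemma chained_reverse_trail: "chained ss \<Longrightarrow> chained (reverse_trail ss)"
  by (simp add: reverse_trail_def successively_map split_def eq_commute[of "fst _"])

lemma trail_reverse_trail:
  assumes "trail V E inc ss"
  shows "trail V E inc (reverse_trail ss)" "start (reverse_trail ss) = finish ss"
    "finish (reverse_trail ss) = start ss" "trail_edges (reverse_trail ss) = trail_edges ss"
proof -
  have edge_list: "map (fst \<circ> snd) (reverse_trail ss) = rev (map (fst \<circ> snd) ss)"
    by (induction ss) (auto simp: reverse_trail_def)
  have "ss \<noteq> []"
    using assms by (simp add: trail_def)
  moreover have "chained (reverse_trail ss)"
    using assms by (simp add: trail_def chained_reverse_trail)
  ultimately show "trail V E inc (reverse_trail ss)"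
    using assms edge_list by (auto simp: trail_def is_step_def reverse_trail_def split: prod.splits)
  show "start (reverse_trail ss) = finish ss" "finish (reverse_trail ss) = start ss"
    using \<open>ss \<noteq> []\<close> by (auto simp: start_def finish_def reverse_trail_def hd_rev last_rev
        hd_map last_map split: prod.splits)
  show "trail_edges (reverse_trail ss) = trail_edges ss"
    using edge_list by (simp add: trail_edges_def)
qed

lemma open_trail_join:
  assumes "open_trail V E inc ss" "open_trail V E inc ts"
    and "trail_edges ss \<inter> trail_edges ts = {}" "finish ss \<in> trail_ends ts"
  obtains us where "trail V E inc us" "start us = start ss" "trail_ends ts = {finish ss, finish us}"
    "trail_edges us = trail_edges ss \<union> trail_edges ts" "length us \<ge> 2"
proof -
  define ts' where "ts' = (if start ts = finish ss then ts else reverse_trail ts)"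
  have ts': "trail V E inc ts'" "start ts' = finish ss" "trail_ends ts' = trail_ends ts"
    "trail_edges ts' = trail_edges ts"
    using assms(2,4) trail_reverse_trail[of V E inc ts]
    by (auto simp: ts'_def open_trail_def trail_ends_def)
  have ss: "trail V E inc ss"
    using assms(1) by (simp add: open_trail_def)
  have ne: "ss \<noteq> []" "ts' \<noteq> []"
    using ss ts'(1) by (simp_all add: trail_def)
  show thesis
  proof (rule that[of "ss @ ts'"])
    show "trail V E inc (ss @ ts')"
      using ss ts' assms(3) by (intro trail_append) auto
    show "trail_ends ts = {finish ss, finish (ss @ ts')}"
      using ts'(2,3) ne by (simp add: trail_ends_def)
  qed (use ne ts'(4) length_append_ge_2[of ss ts'] in simp_all)
qed

section \<open>Splitting even trail systems into closed trails\<close>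

definition incidence_count :: "'a set \<Rightarrow> ('a \<Rightarrow> 'v set) \<Rightarrow> 'v \<Rightarrow> nat" where
  "incidence_count S f v = card {x \<in> S. v \<in> f x}"

lemma incidence_count_remove:
  assumes "finite S" "x \<in> S"
  shows "incidence_count S f v = incidence_count (S - {x}) f v + of_bool (v \<in> f x)"
proof -
  have "{y \<in> S. v \<in> f y} = (if v \<in> f x then insert x {y \<in> S - {x}. v \<in> f y} else {y \<in> S - {x}. v \<in> f y})"
    using assms(2) by auto
  then show ?thesis
    using assms(1) by (simp add: incidence_count_def)
qed

lemma incidence_count_insert:
  "finite S \<Longrightarrow> x \<notin> S \<Longrightarrow> incidence_count (insert x S) f v = incidence_count S f v + of_bool (v \<in> f x)"
  using incidence_count_remove[of "insert x S" x f v] by simp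

lemma incidence_count_remove2:
  assumes "finite S" "x \<in> S" "y \<in> S" "x \<noteq> y"
  shows "incidence_count S f v = incidence_count (S - {x, y}) f v + of_bool (v \<in> f x) + of_bool (v \<in> f y)"
proof -
  have "S - {x} - {y} = S - {x, y}"
    by blast
  then show ?thesis
    using assms incidence_count_remove[of S x f v] incidence_count_remove[of "S - {x}" y f v] by simp
qed

lemma incidence_count_cong:
  "(\<And>x. x \<in> S \<Longrightarrow> f x = g x) \<Longrightarrow> incidence_count S f v = incidence_count S g v"
  unfolding incidence_count_def by (metis (mono_tags, lifting))

definition trail_decomposition ::
    "'v set \<Rightarrow> 'e set \<Rightarrow> ('e \<Rightarrow> 'v set) \<Rightarrow> 'e set \<Rightarrow> ('v \<times> 'e \<times> 'v) list set \<Rightarrow> bool" where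
  "trail_decomposition V E inc E' F \<longleftrightarrow> finite F \<and> (\<forall>W\<in>F. closed_trail V E inc W) \<and>
     (\<Union>W\<in>F. trail_edges W) = E' \<and>
     (\<forall>W\<in>F. \<forall>W'\<in>F. W \<noteq> W' \<longrightarrow> trail_edges W \<inter> trail_edges W' = {} \<and> anchors W \<inter> anchors W' = {})"

lemma trail_decomposition_empty: "trail_decomposition V E inc {} {}"
  by (simp add: trail_decomposition_def)

lemma trail_decomposition_insert_anchor_disjoint:
  assumes "trail_decomposition V E inc E' F" "closed_trail V E inc W"
    and "trail_edges W \<inter> E' = {}" "\<forall>T\<in>F. anchors T \<inter> anchors W = {}"
  shows "trail_decomposition V E inc (E' \<union> trail_edges W) (insert W F)"
proof -
  have "trail_edges T \<inter> trail_edges W = {}" if "T \<in> F" for T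
    using assms(1,3) that by (auto simp: trail_decomposition_def)
  with assms show ?thesis
    unfolding trail_decomposition_def by (simp add: Int_commute) blast
qed

lemma trail_decomposition_remove:
  assumes "trail_decomposition V E inc E' F" "T \<in> F"
  shows "trail_decomposition V E inc (E' - trail_edges T) (F - {T})"
  using assms unfolding trail_decomposition_def by blast

lemma trail_decomposition_insert:
  assumes "trail_decomposition V E inc E' F" "closed_trail V E inc W" "trail_edges W \<inter> E' = {}"
  shows "\<exists>F'. trail_decomposition V E inc (E' \<union> trail_edges W) F'"
  using assms
proof (induction "card F" arbitrary: F E' W rule: less_induct)
  case less
  show ?case
  proof (cases "\<exists>T\<in>F. anchors T \<inter> anchors W \<noteq> {}")
    case False
    then show ?thesis
      using trail_decomposition_insert_anchor_disjoint[OF less.prems] by blast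
  next
    case True
    then obtain T v where T: "T \<in> F" "v \<in> anchors T" "v \<in> anchors W"
      by blast
    have T_closed: "closed_trail V E inc T" and "trail_edges T \<subseteq> E'" "finite F"
      using less.prems(1) T(1) by (auto simp: trail_decomposition_def)
    then have "trail_edges W \<inter> trail_edges T = {}"
      using less.prems(3) by blast
    then obtain W' where W': "closed_trail V E inc W'"
        "trail_edges W' = trail_edges W \<union> trail_edges T"
      by (rule closed_trail_splice[OF less.prems(2) T_closed _ T(3,2)])
    have "\<exists>F'. trail_decomposition V E inc ((E' - trail_edges T) \<union> trail_edges W') F'"
    proof (rule less.hyps)
      show "card (F - {T}) < card F"
        using \<open>finite F\<close> T(1) by (rule card_Diff1_less)
      show "trail_decomposition V E inc (E' - trail_edges T) (F - {T})"
        using less.prems(1) T(1) by (rule trail_decomposition_remove)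
      show "trail_edges W' \<inter> (E' - trail_edges T) = {}"
        using W'(2) less.prems(3) by blast
    qed (rule W'(1))
    moreover have "(E' - trail_edges T) \<union> trail_edges W' = E' \<union> trail_edges W"
      using W'(2) \<open>trail_edges T \<subseteq> E'\<close> by blast
    ultimately show ?thesis
      by simp
  qed
qed

definition even_trail_system ::
    "'v set \<Rightarrow> 'e set \<Rightarrow> ('e \<Rightarrow> 'v set) \<Rightarrow> ('v \<times> 'e \<times> 'v) list set \<Rightarrow> bool" where
  "even_trail_system V E inc S \<longleftrightarrow> finite S \<and> (\<forall>ss\<in>S. open_trail V E inc ss) \<and>
     (\<forall>ss\<in>S. \<forall>ts\<in>S. ss \<noteq> ts \<longrightarrow> trail_edges ss \<inter> trail_edges ts = {}) \<and>
     (\<forall>v. even (incidence_count S trail_ends v))"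

lemma even_card_other_member:
  assumes "even (card A)" "a \<in> A"
  obtains b where "b \<in> A" "b \<noteq> a"
proof -
  have "A \<noteq> {a}"
    using assms(1) by auto
  with assms(2) show thesis
    using that by blast
qed

text \<open>A partner \<open>t\<close> exists because an even number of members of \<open>S\<close> end at \<open>finish s\<close>.\<close>
lemma even_trail_system_join:
  assumes "even_trail_system V E inc S" "s \<in> S"
  obtains t us where "t \<in> S" "t \<noteq> s" "trail V E inc us" "start us = start s"
    "trail_ends t = {finish s, finish us}" "trail_edges us = trail_edges s \<union> trail_edges t"
    "length us \<ge> 2" "finish s \<noteq> start s" "finish s \<noteq> finish us"
proof -
  let ?a = "finish s"
  have "even (card {x \<in> S. ?a \<in> trail_ends x})" "s \<in> {x \<in> S. ?a \<in> trail_ends x}"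
    using assms by (simp_all add: even_trail_system_def incidence_count_def trail_ends_def)
  then obtain t where "t \<in> {x \<in> S. ?a \<in> trail_ends x}" "t \<noteq> s"
    by (rule even_card_other_member)
  then have t: "t \<in> S" "t \<noteq> s" "?a \<in> trail_ends t"
    by simp_all
  have st: "open_trail V E inc s" "open_trail V E inc t" "trail_edges s \<inter> trail_edges t = {}"
    using assms t by (auto simp: even_trail_system_def)
  obtain us where us: "trail V E inc us" "start us = start s" "trail_ends t = {?a, finish us}"
      "trail_edges us = trail_edges s \<union> trail_edges t" "length us \<ge> 2"
    by (rule open_trail_join[OF st t(3)])
  moreover have "?a \<noteq> start s"
    using st(1) by (auto simp: open_trail_def)
  moreover have "?a \<noteq> finish us"
    using st(2) us(3) by (auto simp: open_trail_def trail_ends_def doubleton_eq_iff)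
  ultimately show thesis
    using that t(1,2) by blast
qed

lemma even_trail_system_reduce:
  assumes sys: "even_trail_system V E inc S" and "S \<noteq> {}"
  obtains (joined) S' where "even_trail_system V E inc S'" "card S' < card S"
      "(\<Union>ss\<in>S'. trail_edges ss) = (\<Union>ss\<in>S. trail_edges ss)"
  | (closed) S' W where "even_trail_system V E inc S'" "card S' < card S" "closed_trail V E inc W"
      "trail_edges W \<inter> (\<Union>ss\<in>S'. trail_edges ss) = {}"
      "(\<Union>ss\<in>S. trail_edges ss) = (\<Union>ss\<in>S'. trail_edges ss) \<union> trail_edges W"
proof -
  have fin: "finite S" and opn: "\<forall>ss\<in>S. open_trail V E inc ss"
    and dis: "\<forall>ss\<in>S. \<forall>ts\<in>S. ss \<noteq> ts \<longrightarrow> trail_edges ss \<inter> trail_edges ts = {}"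
    and ev: "\<And>v. even (incidence_count S trail_ends v)"
    using sys by (auto simp: even_trail_system_def)
  obtain s where s: "s \<in> S"
    using \<open>S \<noteq> {}\<close> by blast
  obtain t us where t: "t \<in> S" "t \<noteq> s" and us: "trail V E inc us" "start us = start s"
      "trail_ends t = {finish s, finish us}" "trail_edges us = trail_edges s \<union> trail_edges t"
      "length us \<ge> 2"
    and ab: "finish s \<noteq> start s" and ac: "finish s \<noteq> finish us"
    by (rule even_trail_system_join[OF sys s])
  let ?a = "finish s" and ?b = "start s" and ?c = "finish us" and ?R = "S - {s, t}"
  have count: "incidence_count S trail_ends v =
      incidence_count ?R trail_ends v + of_bool (v \<in> {?b, ?a}) + of_bool (v \<in> {?a, ?c})" for v
    using incidence_count_remove2[OF fin s t(1) t(2)[symmetric], of trail_ends v]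
    by (simp add: trail_ends_def[of s] us(3))
  have R: "finite ?R" "\<forall>ss\<in>?R. open_trail V E inc ss"
      "\<forall>ss\<in>?R. \<forall>ts\<in>?R. ss \<noteq> ts \<longrightarrow> trail_edges ss \<inter> trail_edges ts = {}"
    using fin opn dis by auto
  have us_disjoint: "trail_edges us \<inter> (\<Union>ss\<in>?R. trail_edges ss) = {}"
    using dis s t(1) us(4) by blast
  have edges: "(\<Union>ss\<in>S. trail_edges ss) = (\<Union>ss\<in>?R. trail_edges ss) \<union> trail_edges us"
    using s t(1) us(4) by blast
  have "{s, t} \<subseteq> S" "card {s, t} = 2"
    using s t by auto
  then have card_R: "card ?R + 2 = card S"
    using fin card_mono[OF fin \<open>{s, t} \<subseteq> S\<close>] by (simp add: card_Diff_subset)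
  show thesis
  proof (cases "?c = ?b")
    case True
    have "{?b, ?a} = {?a, ?c}"
      using True by auto
    then have "even (incidence_count ?R trail_ends v)" for v
      using ev[of v] unfolding count[of v] by presburger
    then have "even_trail_system V E inc ?R"
      using R by (simp add: even_trail_system_def)
    moreover have "closed_trail V E inc us"
      using us True by (simp add: closed_trail_def)
    ultimately show thesis
      using closed card_R us_disjoint edges by simp
  next
    case False
    have "trail_edges us \<noteq> {}"
      using us(1) by (simp add: trail_def trail_edges_def)
    then have "us \<notin> ?R"
      using us_disjoint by blast
    then have count_us: "incidence_count (insert us ?R) trail_ends v =
        incidence_count ?R trail_ends v + of_bool (v \<in> {?b, ?c})" for v
      using R(1) us(2) by (simp add: incidence_count_insert trail_ends_def)
    have ends: "of_bool (v \<in> {?b, ?a}) + of_bool (v \<in> {?a, ?c}) =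
        of_bool (v \<in> {?b, ?c}) + (2::nat) * of_bool (v = ?a)" for v
      using ab ac False by auto
    have "incidence_count S trail_ends v =
        incidence_count (insert us ?R) trail_ends v + 2 * of_bool (v = ?a)" for v
      using count[of v] count_us[of v] ends[of v] by linarith
    then have "even (incidence_count (insert us ?R) trail_ends v)" for v
      using ev[of v] by simp
    moreover have "open_trail V E inc us"
      using us(1,2) False by (simp add: open_trail_def)
    ultimately have "even_trail_system V E inc (insert us ?R)"
      using R us_disjoint by (auto simp: even_trail_system_def)
    moreover have "card (insert us ?R) < card S"
      using R(1) \<open>us \<notin> ?R\<close> card_R by simp
    ultimately show thesis
      by (rule joined) (use edges in blast)
  qed
qed

lemma even_trail_system_decomposition:
  "even_trail_system V E inc S \<Longrightarrow> \<exists>F. trail_decomposition V E inc (\<Union>ss\<in>S. trail_edges ss) F"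
proof (induction "card S" arbitrary: S rule: less_induct)
  case less
  show ?case
  proof (cases "S = {}")
    case True
    then show ?thesis
      using trail_decomposition_empty by auto
  next
    case False
    with less.prems show ?thesis
    proof (cases rule: even_trail_system_reduce)
      case (joined S')
      then show ?thesis
        using less.hyps[OF joined(2,1)] by simp
    next
      case (closed S' W)
      obtain F where "trail_decomposition V E inc (\<Union>ss\<in>S'. trail_edges ss) F"
        using less.hyps[OF closed(2,1)] ..
      from trail_decomposition_insert[OF this closed(3,4)] closed(5) show ?thesis
        by simp
    qed
  qed
qed

definition walk_of :: "('v \<times> 'e \<times> 'v) list \<Rightarrow> 'v list \<times> 'e list" where
  "walk_of ss = (map fst ss @ [start ss], map (fst \<circ> snd) ss)"

lemma closed_trail_walk_of:
  assumes "closed_trail V E inc ss"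
  shows "closed_strict_trail V E inc (fst (walk_of ss)) (snd (walk_of ss))"
    "set (fst (walk_of ss)) = anchors ss" "set (snd (walk_of ss)) = trail_edges ss"
proof -
  have ne: "ss \<noteq> []" and ch: "chained ss" and steps: "\<forall>s\<in>set ss. is_step V E inc s"
    and dist: "distinct (map (fst \<circ> snd) ss)" and closed: "finish ss = start ss"
    and len: "length ss \<ge> 2"
    using assms by (auto simp: closed_trail_def trail_def)
  let ?vs = "map fst ss @ [start ss]" and ?es = "map (fst \<circ> snd) ss"
  have start_in: "start ss \<in> set (map fst ss)"
    using ne by (simp add: start_def)
  show "set (fst (walk_of ss)) = anchors ss" "set (snd (walk_of ss)) = trail_edges ss"
    using start_in by (auto simp: walk_of_def anchors_def trail_edges_def)
  have next_anchor: "?vs ! Suc i = snd (snd (ss ! i))" if "i < length ss" for i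
  proof (cases "Suc i < length ss")
    case True
    then show ?thesis
      using successively_nth[OF ch True] by (simp add: nth_append)
  next
    case False
    then have "i = length ss - 1"
      using that by simp
    then show ?thesis
      using ne closed by (simp add: nth_append finish_def last_conv_nth)
  qed
  have step_i: "?vs ! i \<noteq> ?vs ! Suc i \<and> ?vs ! i \<in> inc (?es ! i) \<and> ?vs ! Suc i \<in> inc (?es ! i)"
    if "i < length ss" for i
  proof -
    have "is_step V E inc (ss ! i)"
      using steps that by simp
    then show ?thesis
      using next_anchor[OF that] that by (auto simp: is_step_def nth_append split: prod.splits)
  qed
  have "set ?vs \<subseteq> V" "set ?es \<subseteq> E"
    using steps start_in by (auto simp: is_step_def split: prod.splits)
  then have "is_walk V E inc ?vs ?es"
    using step_i by (simp add: is_walk_def)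
  moreover have "hd ?vs = last ?vs"
    using ne by (simp add: start_def hd_map)
  ultimately show "closed_strict_trail V E inc (fst (walk_of ss)) (snd (walk_of ss))"
    using len dist by (simp add: closed_strict_trail_def walk_of_def)
qed

lemma trail_decomposition_euler_family:
  assumes "trail_decomposition V E inc E F"
  shows "euler_family V E inc (walk_of ` F)"
proof -
  have closed: "\<And>W. W \<in> F \<Longrightarrow> closed_trail V E inc W" and cover: "(\<Union>W\<in>F. trail_edges W) = E"
    and disj: "\<And>W W'. W \<in> F \<Longrightarrow> W' \<in> F \<Longrightarrow> W \<noteq> W' \<Longrightarrow>
      trail_edges W \<inter> trail_edges W' = {} \<and> anchors W \<inter> anchors W' = {}"
    using assms by (auto simp: trail_decomposition_def)
  have unique: "\<exists>!X. X \<in> walk_of ` F \<and> e \<in> set (snd X)" if "e \<in> E" for e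
  proof -
    obtain W where W: "W \<in> F" "e \<in> trail_edges W"
      using cover \<open>e \<in> E\<close> by blast
    have only_W: "W' = W" if "W' \<in> F" "e \<in> trail_edges W'" for W'
      using disj[OF that(1) W(1)] that(2) W(2) by blast
    show ?thesis
    proof (rule ex1I[of _ "walk_of W"])
      show "walk_of W \<in> walk_of ` F \<and> e \<in> set (snd (walk_of W))"
        using W closed_trail_walk_of(3)[OF closed[OF W(1)]] by simp
    next
      fix X
      assume "X \<in> walk_of ` F \<and> e \<in> set (snd X)"
      then obtain W' where "W' \<in> F" "X = walk_of W'" "e \<in> trail_edges W'"
        using closed_trail_walk_of(3)[OF closed] by auto
      then show "X = walk_of W"
        using only_W by simp
    qed
  qed
  have "set (fst (walk_of W)) \<inter> set (fst (walk_of W')) = {}"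
    if "W \<in> F" "W' \<in> F" "walk_of W \<noteq> walk_of W'" for W W'
    using that disj[of W W'] closed_trail_walk_of(2)[OF closed] by auto
  then show ?thesis
    using unique closed_trail_walk_of(1)[OF closed] by (auto simp: euler_family_def)
qed

section \<open>Even pairings\<close>

text \<open>In terms of the incidence graph of \<open>H\<close>, the pairs \<open>p e\<close> form an even subgraph in which every
  edge of \<open>H\<close> has degree two.\<close>
definition even_pairing :: "'e set \<Rightarrow> ('e \<Rightarrow> 'v set) \<Rightarrow> ('e \<Rightarrow> 'v set) \<Rightarrow> bool" where
  "even_pairing C inc p \<longleftrightarrow>
     (\<forall>e\<in>C. p e \<subseteq> inc e \<and> card (p e) = 2) \<and> (\<forall>v. even (incidence_count C p v))"

lemma even_pairing_quasi_eulerian: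
  assumes "hypergraph V E inc" "even_pairing E inc p"
  shows "quasi_eulerian V E inc"
proof -
  have "\<forall>e\<in>E. \<exists>vw. p e = {fst vw, snd vw} \<and> fst vw \<noteq> snd vw"
    using assms(2) by (auto simp: even_pairing_def card_2_iff)
  then obtain g where g: "\<And>e. e \<in> E \<Longrightarrow> p e = {fst (g e), snd (g e)} \<and> fst (g e) \<noteq> snd (g e)"
    by metis
  define step where "step e = [(fst (g e), e, snd (g e))]" for e
  have step_inj: "inj_on step E"
    by (rule inj_onI) (simp add: step_def)
  have step_edges: "trail_edges (step e) = {e}" for e
    by (simp add: step_def trail_edges_def)
  have ends: "trail_ends (step e) = p e" if "e \<in> E" for e
    using g[OF that] by (simp add: step_def trail_ends_def start_def finish_def)
  have "open_trail V E inc (step e)" if "e \<in> E" for e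
  proof -
    have "p e \<subseteq> inc e" "inc e \<subseteq> V"
      using assms that by (auto simp: hypergraph_def even_pairing_def)
    then show ?thesis
      using g[OF that] that
      by (auto simp: step_def open_trail_def trail_def is_step_def start_def finish_def)
  qed
  moreover have "incidence_count (step ` E) trail_ends v = incidence_count E p v" for v
  proof -
    have "{ss \<in> step ` E. v \<in> trail_ends ss} = step ` {e \<in> E. v \<in> p e}"
      using ends by auto
    then show ?thesis
      using inj_on_subset[OF step_inj] by (simp add: incidence_count_def card_image)
  qed
  ultimately have "even_trail_system V E inc (step ` E)"
    using assms step_edges by (auto simp: even_trail_system_def hypergraph_def even_pairing_def)
  then obtain F where "trail_decomposition V E inc E F"
    using even_trail_system_decomposition step_edges by fastforce
  then show ?thesis
    unfolding quasi_eulerian_def by (blast intro: trail_decomposition_euler_family)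
qed

lemma card_ge_3_other:
  assumes "card A \<ge> 3"
  obtains c where "c \<in> A" "c \<noteq> a" "c \<noteq> b"
proof -
  have "\<not> A \<subseteq> {a, b}"
  proof
    assume "A \<subseteq> {a, b}"
    then have "card A \<le> card {a, b}"
      by (rule card_mono[rotated]) simp
    also have "\<dots> \<le> 2"
      by (simp add: card_insert_le_m1)
    finally show False
      using assms by simp
  qed
  then show thesis
    using that by blast
qed

lemma even_pairing_empty: "even_pairing {} inc p"
  by (simp add: even_pairing_def incidence_count_def)

lemma even_pairing_insert_twins:
  assumes "even_pairing C inc p" "finite C" "x \<notin> C" "f \<notin> C" "x \<noteq> f"
    and "card (inc x \<inter> inc f) \<ge> 2"
  shows "\<exists>p'. even_pairing (insert x (insert f C)) inc p'"
proof -
  obtain a b where ab: "a \<in> inc x \<inter> inc f" "b \<in> inc x \<inter> inc f" "a \<noteq> b"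
    using assms(6) by (auto simp: numeral_2_eq_2 card_le_Suc_iff)
  let ?p = "p(x := {a, b}, f := {a, b})"
  have "incidence_count (insert x (insert f C)) ?p v = incidence_count C p v + 2 * of_bool (v \<in> {a, b})" for v
  proof -
    have "incidence_count C ?p v = incidence_count C p v"
      using assms(3,4) by (intro incidence_count_cong) auto
    then show ?thesis
      using assms(2-5) by (simp add: incidence_count_insert)
  qed
  then have "even_pairing (insert x (insert f C)) inc ?p"
    using assms(1,5) ab by (auto simp: even_pairing_def)
  then show ?thesis
    by blast
qed

text \<open>The pair \<open>{a, b}\<close> of \<open>f\<close> is replaced by \<open>{a, c}\<close> in \<open>x\<close> and \<open>{b, c}\<close> in \<open>f\<close>, where \<open>a\<close> can be
  taken in \<open>x\<close> because \<open>f\<close> has only one vertex outside \<open>x\<close>, and \<open>c \<in> x \<inter> f\<close> differs from \<open>a\<close>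
  and \<open>b\<close>.\<close>
lemma even_pairing_insert_D3_arc:
  assumes "even_pairing C inc p" "finite C" "f \<in> C" "x \<notin> C" "(x, f) \<in> D3_arcs E inc"
  shows "\<exists>p'. even_pairing (insert x C) inc p'"
proof -
  obtain y where y: "inc f - inc x = {y}"
    using assms(5) by (auto simp: D3_arcs_def card_1_singleton_iff)
  have common: "card (inc x \<inter> inc f) \<ge> 3"
    using assms(5) by (simp add: D3_arcs_def)
  have pf: "p f \<subseteq> inc f" "card (p f) = 2"
    using assms(1,3) by (auto simp: even_pairing_def)
  obtain a b where ab: "p f = {a, b}" "a \<noteq> b" "a \<noteq> y"
  proof -
    obtain u w where "p f = {u, w}" "u \<noteq> w"
      using pf(2) by (auto simp: card_2_iff)
    then show thesis
      using that[of u w] that[of w u] by (cases "u = y") (simp_all add: insert_commute)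
  qed
  have "a \<in> inc x" "b \<in> inc f"
    using ab pf(1) y by auto
  obtain c where c: "c \<in> inc x \<inter> inc f" "c \<noteq> a" "c \<noteq> b"
    using card_ge_3_other[OF common] .
  have "x \<noteq> f"
    using assms(3,4) by blast
  define p' where "p' = p(x := {a, c}, f := {b, c})"
  have pairs: "\<forall>e\<in>insert x C. p' e \<subseteq> inc e \<and> card (p' e) = 2"
    using assms(1) c \<open>a \<in> inc x\<close> \<open>b \<in> inc f\<close> \<open>x \<noteq> f\<close>
    by (auto simp: even_pairing_def p'_def)
  have "even (incidence_count (insert x C) p' v)" for v
  proof -
    have "incidence_count (C - {f}) p' v = incidence_count (C - {f}) p v"
      using assms(4) by (intro incidence_count_cong) (auto simp: p'_def)
    moreover have "incidence_count (insert x C) p' v = incidence_count C p' v + of_bool (v \<in> {a, c})"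
      using assms(2,4) \<open>x \<noteq> f\<close> by (simp add: incidence_count_insert p'_def)
    moreover have "incidence_count C p' v = incidence_count (C - {f}) p' v + of_bool (v \<in> {b, c})"
      using assms(2,3) \<open>x \<noteq> f\<close> by (simp add: incidence_count_remove[of C f] p'_def)
    moreover have "incidence_count C p v = incidence_count (C - {f}) p v + of_bool (v \<in> {a, b})"
      using assms(2,3) ab(1) by (simp add: incidence_count_remove[of C f])
    moreover have "of_bool (v \<in> {a, c}) + of_bool (v \<in> {b, c}) =
        of_bool (v \<in> {a, b}) + (2::nat) * of_bool (v = c)"
      using ab(2) c(2,3) by auto
    ultimately have "incidence_count (insert x C) p' v = incidence_count C p v + 2 * of_bool (v = c)"
      by linarith
    moreover have "even (incidence_count C p v)"
      using assms(1) by (simp add: even_pairing_def)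
    ultimately show ?thesis
      by simp
  qed
  with pairs show ?thesis
    by (auto simp: even_pairing_def)
qed

section \<open>Rooted forests\<close>

text \<open>\<open>R\<close> is the set of roots, \<open>par\<close> the parent map and \<open>d\<close> a depth that decreases towards the
  roots; the last clause says that no tree consists of a root alone.\<close>
definition rooted_forest :: "'a set \<Rightarrow> ('a \<times> 'a) set \<Rightarrow> 'a set \<Rightarrow> ('a \<Rightarrow> 'a) \<Rightarrow> ('a \<Rightarrow> nat) \<Rightarrow> bool" where
  "rooted_forest C Arcs R par d \<longleftrightarrow>
     (\<forall>x\<in>C - R. par x \<in> C \<and> d (par x) < d x \<and> (x, par x) \<in> Arcs) \<and>
     (\<forall>r\<in>C \<inter> R. \<exists>y\<in>C - R. par y = r)"

lemma rooted_forest_leaf: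
  assumes "rooted_forest C Arcs R par d" "finite C" "C \<noteq> {}"
  obtains x where "x \<in> C - R" "\<forall>z\<in>C - R. par z \<noteq> x"
proof -
  have "C - R \<noteq> {}"
    using assms(1,3) by (auto simp: rooted_forest_def)
  then have "Max (d ` (C - R)) \<in> d ` (C - R)"
    using assms(2) by simp
  then obtain x where x: "x \<in> C - R" "d x = Max (d ` (C - R))"
    by auto
  then have deepest: "\<forall>z\<in>C - R. d z \<le> d x"
    using assms(2) by simp
  have "par z \<noteq> x" if "z \<in> C - R" for z
  proof
    assume "par z = x"
    then have "d x < d z"
      using assms(1) that by (auto simp: rooted_forest_def)
    moreover have "d z \<le> d x"
      using deepest that by blast
    ultimately show False
      by simp
  qed
  with x(1) show thesis
    using that by blast
qed

lemma rooted_forest_remove_leaf: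
  assumes "rooted_forest C Arcs R par d" "\<forall>z\<in>C - R. par z \<noteq> x"
    and "par x \<notin> R \<or> (\<exists>z\<in>C - R. z \<noteq> x \<and> par z = par x)"
  shows "rooted_forest (C - {x}) Arcs R par d"
proof -
  have "\<exists>y\<in>C - {x} - R. par y = r" if r: "r \<in> (C - {x}) \<inter> R" for r
  proof -
    obtain y where y: "y \<in> C - R" "par y = r"
      using assms(1) r by (auto simp: rooted_forest_def)
    show ?thesis
    proof (cases "y = x")
      case True
      then show ?thesis
        using assms(3) y r by auto
    qed (use y in auto)
  qed
  with assms(1,2) show ?thesis
    by (auto simp: rooted_forest_def)
qed

lemma rooted_forest_remove_leaf_and_root:
  assumes "rooted_forest C Arcs R par d" "\<forall>z\<in>C - R. par z \<noteq> x"
    and "par x \<in> R" "\<forall>z\<in>C - R. par z = par x \<longrightarrow> z = x"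
  shows "rooted_forest (C - {x, par x}) Arcs R par d"
proof -
  have "\<exists>y\<in>C - {x, par x} - R. par y = r" if r: "r \<in> (C - {x, par x}) \<inter> R" for r
  proof -
    obtain y where y: "y \<in> C - R" "par y = r"
      using assms(1) r by (auto simp: rooted_forest_def)
    then have "y \<noteq> x" "y \<noteq> par x"
      using r assms(3) by auto
    with y show ?thesis
      by auto
  qed
  moreover have "par z \<noteq> par x" if "z \<in> C - R" "z \<noteq> x" for z
    using assms(4) that by blast
  ultimately show ?thesis
    using assms(1,2) by (auto simp: rooted_forest_def)
qed

text \<open>If the deepest leaf \<open>x\<close> is the only child of the root \<open>f\<close>, both are removed at once, since
  \<open>f\<close> would otherwise become a tree consisting of a root alone.\<close>
lemma rooted_forest_D3_even_pairing:
  assumes "finite C" "rooted_forest C (D3_arcs E inc) R par d"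
  shows "\<exists>p. even_pairing C inc p"
  using assms
proof (induction "card C" arbitrary: C rule: less_induct)
  case less
  show ?case
  proof (cases "C = {}")
    case True
    then show ?thesis
      using even_pairing_empty by blast
  next
    case False
    obtain x where x: "x \<in> C - R" "\<forall>z\<in>C - R. par z \<noteq> x"
      using rooted_forest_leaf[OF less.prems(2,1) False] .
    let ?f = "par x"
    have f: "?f \<in> C" "d ?f < d x" "(x, ?f) \<in> D3_arcs E inc"
      using less.prems(2) x(1) by (auto simp: rooted_forest_def)
    then have "?f \<noteq> x"
      by auto
    show ?thesis
    proof (cases "?f \<in> R \<and> (\<forall>z\<in>C - R. par z = ?f \<longrightarrow> z = x)")
      case True
      then have "rooted_forest (C - {x, ?f}) (D3_arcs E inc) R par d"
        using rooted_forest_remove_leaf_and_root[OF less.prems(2) x(2)] by blast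
      moreover have "card (C - {x, ?f}) < card C"
        using less.prems(1) x(1) by (intro psubset_card_mono) auto
      ultimately obtain p where p: "even_pairing (C - {x, ?f}) inc p"
        using less.hyps less.prems(1) by blast
      have "card (inc x \<inter> inc ?f) \<ge> 2"
        using f(3) by (simp add: D3_arcs_def)
      then have "\<exists>p'. even_pairing (insert x (insert ?f (C - {x, ?f}))) inc p'"
        using p less.prems(1) \<open>?f \<noteq> x\<close> by (intro even_pairing_insert_twins) auto
      moreover have "insert x (insert ?f (C - {x, ?f})) = C"
        using x(1) f(1) by blast
      ultimately show ?thesis
        by simp
    next
      case False
      then have "rooted_forest (C - {x}) (D3_arcs E inc) R par d"
        using rooted_forest_remove_leaf[OF less.prems(2) x(2)] by blast
      moreover have "card (C - {x}) < card C"
        using less.prems(1) x(1) by (intro card_Diff1_less) auto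
      ultimately obtain p where "even_pairing (C - {x}) inc p"
        using less.hyps less.prems(1) by blast
      then have "\<exists>p'. even_pairing (insert x (C - {x})) inc p'"
        using less.prems(1) f by (intro even_pairing_insert_D3_arc) auto
      moreover have "insert x (C - {x}) = C"
        using x(1) by blast
      ultimately show ?thesis
        by simp
    qed
  qed
qed

definition dist_to :: "'a set \<Rightarrow> ('a \<times> 'a) set \<Rightarrow> 'a \<Rightarrow> nat" where
  "dist_to R A x = (LEAST n. \<exists>r\<in>R. (x, r) \<in> A ^^ n)"

lemma dist_to_step:
  assumes "(x, r) \<in> A\<^sup>*" "r \<in> R" "x \<notin> R"
  shows "\<exists>z. (x, z) \<in> A \<and> dist_to R A z < dist_to R A x"
proof -
  obtain n where "(x, r) \<in> A ^^ n"
    using assms(1) rtrancl_power by blast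
  with assms(2) have "\<exists>n. \<exists>r\<in>R. (x, r) \<in> A ^^ n"
    by blast
  then have "\<exists>r\<in>R. (x, r) \<in> A ^^ dist_to R A x"
    unfolding dist_to_def by (rule LeastI_ex)
  then obtain r' where r': "r' \<in> R" "(x, r') \<in> A ^^ dist_to R A x"
    by blast
  then obtain m where m: "dist_to R A x = Suc m"
    using assms(3) by (cases "dist_to R A x") auto
  then obtain z where z: "(x, z) \<in> A" "(z, r') \<in> A ^^ m"
    using r'(2) relpow_Suc_D2 by fastforce
  have "dist_to R A z \<le> m"
    unfolding dist_to_def using z(2) r'(1) by (blast intro: Least_le)
  with z(1) m show ?thesis
    by auto
qed

lemma descending_map_hits_sink:
  fixes d :: "'a \<Rightarrow> nat"
  assumes "finite C" "C - {r} \<noteq> {}" "\<And>y. y \<in> C - {r} \<Longrightarrow> par y \<in> C \<and> d (par y) < d y"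
  shows "\<exists>y\<in>C - {r}. par y = r"
proof -
  have "Min (d ` (C - {r})) \<in> d ` (C - {r})"
    using assms(1,2) by simp
  then obtain y where y: "y \<in> C - {r}" "d y = Min (d ` (C - {r}))"
    by (metis imageE)
  have "par y = r"
  proof (rule ccontr)
    assume "par y \<noteq> r"
    then have "par y \<in> C - {r}"
      using assms(3)[OF y(1)] by blast
    then have "d y \<le> d (par y)"
      using assms(1) y(2) by simp
    with assms(3)[OF y(1)] show False
      by simp
  qed
  with y(1) show ?thesis
    by blast
qed

lemma rooted_forest_of_partition:
  assumes disjoint: "\<forall>C\<in>P. \<forall>D\<in>P. C \<noteq> D \<longrightarrow> C \<inter> D = {}"
    and A_blocks: "A \<subseteq> (\<Union>C\<in>P. C \<times> C)" and "A \<subseteq> Arcs"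
    and blocks: "\<And>C. C \<in> P \<Longrightarrow> finite C \<and> card C \<ge> 2 \<and> root C \<in> C \<and> (\<forall>x\<in>C. (x, root C) \<in> A\<^sup>*)"
  shows "\<exists>par. rooted_forest (\<Union>P) Arcs (root ` P) par (dist_to (root ` P) A)"
proof -
  let ?R = "root ` P" and ?d = "dist_to (root ` P) A"
  have arc_in_block: "y \<in> C" if xy: "(x, y) \<in> A" and x: "x \<in> C" "C \<in> P" for x y C
  proof -
    obtain D where "D \<in> P" "x \<in> D" "y \<in> D"
      using A_blocks xy by blast
    with disjoint x show ?thesis
      by blast
  qed
  have root_of_block: "r = root C" if C: "C \<in> P" "r \<in> C" and r: "r \<in> ?R" for C r
  proof -
    obtain D where D: "D \<in> P" "r = root D"
      using r by blast
    then have "r \<in> D"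
      using blocks[OF D(1)] by simp
    then have "C = D"
      using disjoint C D(1) by blast
    with D(2) show ?thesis
      by simp
  qed
  have "\<exists>z. (x, z) \<in> A \<and> ?d z < ?d x" if x: "x \<in> \<Union>P - ?R" for x
  proof -
    obtain C where C: "C \<in> P" "x \<in> C"
      using x by blast
    then have "(x, root C) \<in> A\<^sup>*" "root C \<in> ?R"
      using blocks[OF C(1)] by auto
    then show ?thesis
      using x by (intro dist_to_step) auto
  qed
  then obtain par where par: "\<And>x. x \<in> \<Union>P - ?R \<Longrightarrow> (x, par x) \<in> A \<and> ?d (par x) < ?d x"
    by metis
  have "\<exists>y\<in>\<Union>P - ?R. par y = r" if r: "r \<in> \<Union>P \<inter> ?R" for r
  proof -
    obtain C where C: "C \<in> P" "r = root C"
      using r by blast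
    have "C - {r} \<noteq> {}"
    proof
      assume "C - {r} = {}"
      then have "card C \<le> card {r}"
        by (intro card_mono) auto
      with blocks[OF C(1)] show False
        by simp
    qed
    moreover have non_root: "y \<notin> ?R" if "y \<in> C - {r}" for y
      using root_of_block[OF C(1)] that C(2) by blast
    then have "par y \<in> C \<and> ?d (par y) < ?d y" if "y \<in> C - {r}" for y
      using par[of y] arc_in_block[of y "par y" C] that C(1) by blast
    ultimately obtain y where "y \<in> C - {r}" "par y = r"
      using descending_map_hits_sink[of C r par ?d] blocks[OF C(1)] by blast
    with non_root C(1) show ?thesis
      by blast
  qed
  moreover have "par x \<in> \<Union>P \<and> ?d (par x) < ?d x \<and> (x, par x) \<in> Arcs"
    if x: "x \<in> \<Union>P - ?R" for x
    using par[OF x] arc_in_block x \<open>A \<subseteq> Arcs\<close> by blast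
  ultimately have "rooted_forest (\<Union>P) Arcs ?R par ?d"
    unfolding rooted_forest_def by blast
  then show ?thesis
    by blast
qed

lemma spanning_arborescence_forest_rooted_forest:
  assumes "has_spanning_arborescence_forest N Arcs"
  shows "\<exists>R par d. rooted_forest N Arcs R par d"
proof -
  obtain A P where A: "A \<subseteq> Arcs" "A \<subseteq> (\<Union>C\<in>P. C \<times> C)" and P: "\<Union>P = N"
      "\<forall>C\<in>P. \<forall>D\<in>P. C \<noteq> D \<longrightarrow> C \<inter> D = {}"
    and arb: "\<forall>C\<in>P. card C \<ge> 2 \<and> arborescence C (A \<inter> (C \<times> C))"
    using assms unfolding has_spanning_arborescence_forest_def by blast
  have "\<exists>r. finite C \<and> card C \<ge> 2 \<and> r \<in> C \<and> (\<forall>x\<in>C. (x, r) \<in> A\<^sup>*)" if "C \<in> P" for C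
  proof -
    have C: "card C \<ge> 2" "arborescence C (A \<inter> (C \<times> C))"
      using arb that by auto
    then obtain r where r: "finite C" "r \<in> C" "\<forall>x\<in>C. (x, r) \<in> (A \<inter> (C \<times> C))\<^sup>*"
      unfolding arborescence_def by blast
    have "(A \<inter> (C \<times> C))\<^sup>* \<subseteq> A\<^sup>*"
      by (rule rtrancl_mono) blast
    with C(1) r show ?thesis
      by blast
  qed
  then obtain root where "\<And>C. C \<in> P \<Longrightarrow>
      finite C \<and> card C \<ge> 2 \<and> root C \<in> C \<and> (\<forall>x\<in>C. (x, root C) \<in> A\<^sup>*)"
    by metis
  then have "\<exists>par. rooted_forest (\<Union>P) Arcs (root ` P) par (dist_to (root ` P) A)"
    by (rule rooted_forest_of_partition[OF P(2) A(2,1)])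
  with P(1) show ?thesis
    by blast
qed

theorem theorem2p9:
  fixes V :: "'v set" and E :: "'e set" and inc :: "'e \<Rightarrow> 'v set"
  assumes "hypergraph V E inc"
    and "has_spanning_arborescence_forest E (D3_arcs E inc)"
  shows "quasi_eulerian V E inc"
proof -
  obtain R par d where "rooted_forest E (D3_arcs E inc) R par d"
    using spanning_arborescence_forest_rooted_forest[OF assms(2)] by blast
  moreover have "finite E"
    using assms(1) by (simp add: hypergraph_def)
  ultimately obtain p where "even_pairing E inc p"
    using rooted_forest_D3_even_pairing by blast
  with assms(1) show ?thesis
    by (rule even_pairing_quasi_eulerian)
qed

end
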